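(* Let $\mu$ be a critical offspring distribution and let $X_1,X_2,\dots$ be i.i.d. with $\mathbf P(X_1=i)=\mu_{i+1}$ for $i\ge-1$. Then \[ \mathbf P\Big(\sum_{i=1}^nX_i=-1\Big)=e^{-o(n)} \] as $n\to\infty$ along all $n$ for which this probability is positive.
   Context: An offspring distribution is a probability measure $\mu=(\mu_k)_{k\ge0}$ on $\mathbb Z_+$; it is critical if $\sum_kk\mu_k=1$. *)

theory Defs
  imports "HOL-Probability.Probability"
begin

definition step_pmf :: "nat pmf \<Rightarrow> int pmf" where
  "step_pmf \<mu> = map_pmf (\<lambda>k. int k - 1) \<mu>"

fun walk_pmf :: "nat pmf \<Rightarrow> nat \<Rightarrow> int pmf" where
  "walk_pmf \<mu> 0 = return_pmf 0"
| "walk_pmf \<mu> (Suc n) = bind_pmf (walk_pmf \<mu> n) (\<lambda>s. map_pmf (\<lambda>x. s + x) (step_pmf \<mu>))"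

definition critical :: "nat pmf \<Rightarrow> bool" where
  "critical \<mu> \<longleftrightarrow> (\<lambda>k. real k * pmf \<mu> k) sums 1"

end

theory Submission
  imports Defs
begin

text \<open>
  Since the walk has i.i.d. increments, its point probabilities are supermultiplicative:
  P(S_(m+n) = x + y) \<ge> P(S_m = x) P(S_n = y).  It therefore suffices to find, for every
  \<epsilon> > 0, one g with P(S_g = 0) \<ge> e^(-\<epsilon> g); concatenating returns to 0 then propagates
  the bound along every residue class mod g.  The time T at which the walk first hits -1
  has a generating function y(s) satisfying Lagrange's equation y = s \<phi>(y), where \<phi> is the
  generating function of \<mu>.  Criticality gives \<phi>(y) \<ge> y, which forces y(s) = \<infinity> for
  every s > 1; thus P(T = n) \<ge> e^(-\<epsilon> n) for infinitely many n, and a few such passages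
  below the origin, after one large upward step, return the walk to 0.
\<close>

lemma pmf_nat_sums_1: "(\<lambda>k. pmf \<mu> k) sums 1"
  using sums_infsetsum_nat[OF pmf_abs_summable[of \<mu> UNIV]] infsetsum_pmf_eq_1[of \<mu> UNIV] by simp

lemma pmf_bind_ge_finite_sum:
  assumes "finite S"
  shows "(\<Sum>s\<in>S. pmf N s * pmf (f s) i) \<le> pmf (bind_pmf N f) i"
proof -
  have "(\<Sum>s\<in>S. pmf N s * pmf (f s) i) = (\<integral>x. pmf (f x) i * indicator S x \<partial>measure_pmf N)"
    by (subst integral_measure_pmf_real[where A=S]) (auto simp: assms mult.commute indicator_def)
  also have "\<dots> \<le> (\<integral>x. pmf (f x) i \<partial>measure_pmf N)"
    by (intro integral_mono measure_pmf.integrable_const_bound[where B=1])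
       (auto simp: indicator_def pmf_le_1)
  finally show ?thesis by (simp add: pmf_bind)
qed

section \<open>Point probabilities of the walk\<close>

lemma walk_pmf_add:
  "walk_pmf \<mu> (m + n) = bind_pmf (walk_pmf \<mu> m) (\<lambda>a. map_pmf ((+) a) (walk_pmf \<mu> n))"
proof (induction n)
  case 0
  then show ?case by (simp add: map_return_pmf bind_return_pmf')
next
  case (Suc n)
  then show ?case
    by (simp add: bind_assoc_pmf bind_map_pmf map_bind_pmf map_pmf_comp o_def add.assoc[symmetric])
qed

lemma pmf_map_pmf_add: "pmf (map_pmf ((+) s) p) (s + x) = pmf p (x :: int)"
  by (rule pmf_map_inj') (auto simp: inj_def)

lemma pmf_walk_supermult:
  "pmf (walk_pmf \<mu> m) x * pmf (walk_pmf \<mu> n) y \<le> pmf (walk_pmf \<mu> (m + n)) (x + y)"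
  using pmf_bind_ge_finite_sum[of "{x}" "walk_pmf \<mu> m" "\<lambda>s. map_pmf ((+) s) (walk_pmf \<mu> n)" "x + y"]
  by (simp add: pmf_map_pmf_add walk_pmf_add)

lemma pmf_walk_power_le:
  "pmf (walk_pmf \<mu> n) x ^ c \<le> pmf (walk_pmf \<mu> (c * n)) (of_nat c * x)"
proof (induction c)
  case (Suc c)
  have "pmf (walk_pmf \<mu> n) x ^ Suc c \<le> pmf (walk_pmf \<mu> n) x * pmf (walk_pmf \<mu> (c * n)) (of_nat c * x)"
    using Suc by (simp add: mult_left_mono)
  also have "\<dots> \<le> pmf (walk_pmf \<mu> (n + c * n)) (x + of_nat c * x)"
    by (rule pmf_walk_supermult)
  finally show ?case by (simp add: algebra_simps)
qed simp

lemma pmf_step_pmf: "pmf (step_pmf \<mu>) (int k - 1) = pmf \<mu> k"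
  unfolding step_pmf_def by (rule pmf_map_inj') (auto simp: inj_def)

lemma pmf_walk_one: "pmf (walk_pmf \<mu> 1) (int k - 1) = pmf \<mu> k"
proof -
  have "(+) (0::int) = (\<lambda>x. x)" by auto
  then show ?thesis by (simp add: bind_return_pmf pmf_step_pmf map_pmf_ident)
qed

lemma pmf_walk_Suc_ge_sum:
  assumes "finite S"
  shows "(\<Sum>s\<in>S. pmf (walk_pmf \<mu> n) s * pmf (step_pmf \<mu>) (x - s)) \<le> pmf (walk_pmf \<mu> (Suc n)) x"
proof -
  have "pmf (map_pmf ((+) s) (step_pmf \<mu>)) x = pmf (step_pmf \<mu>) (x - s)" for s
    using pmf_map_pmf_add[of s _ "x - s"] by simp
  then show ?thesis
    using pmf_bind_ge_finite_sum[OF assms, of "walk_pmf \<mu> n" "\<lambda>s. map_pmf ((+) s) (step_pmf \<mu>)" x]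
    by simp
qed

lemma set_pmf_walk_nonneg:
  assumes "pmf \<mu> 0 = 0"
  shows "set_pmf (walk_pmf \<mu> n) \<subseteq> {0..}"
proof (induction n)
  case (Suc n)
  have "k \<noteq> 0" if "k \<in> set_pmf \<mu>" for k
    using assms that by (metis set_pmf_iff)
  then have "set_pmf (step_pmf \<mu>) \<subseteq> {0..}"
    by (force simp: step_pmf_def)
  with Suc show ?case by (force simp: step_pmf_def)
qed simp

section \<open>First passage below the origin\<close>

text \<open>
  first_passage \<mu> j n is the probability that the walk first reaches -j at step n; the
  recursion conditions on the first step K - 1.  Summing over k \<le> n + 1 only is harmless,
  since the walk needs at least k + j - 1 further steps to descend from k - 1 to -j.
\<close>
fun first_passage :: "nat pmf \<Rightarrow> nat \<Rightarrow> nat \<Rightarrow> real" where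
  "first_passage \<mu> j 0 = (if j = 0 then 1 else 0)"
| "first_passage \<mu> j (Suc n) =
     (if j = 0 then 0 else (\<Sum>k\<le>Suc n. pmf \<mu> k * first_passage \<mu> (k + j - 1) n))"

lemma first_passage_nonneg: "0 \<le> first_passage \<mu> j n"
  by (induction n arbitrary: j) (auto simp del: sum.atMost_Suc intro!: sum_nonneg)

lemma first_passage_eq_0: "n < j \<Longrightarrow> first_passage \<mu> j n = 0"
  by (induction n arbitrary: j) auto

lemma first_passage_0: "first_passage \<mu> 0 n = (if n = 0 then 1 else 0)"
  by (cases n) auto

lemma first_passage_le_pmf_walk: "first_passage \<mu> j n \<le> pmf (walk_pmf \<mu> n) (- int j)"
proof (induction n arbitrary: j)
  case (Suc n)
  show ?case
  proof (cases "j = 0")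
    case False
    let ?f = "\<lambda>k::nat. - int (k + j - 1)"
    have inj: "inj_on ?f {..Suc n}" using False by (auto simp: inj_on_def)
    have "first_passage \<mu> j (Suc n) = (\<Sum>k\<le>Suc n. pmf \<mu> k * first_passage \<mu> (k + j - 1) n)"
      using False by simp
    also have "\<dots> \<le> (\<Sum>k\<le>Suc n. pmf (walk_pmf \<mu> n) (?f k) * pmf (step_pmf \<mu>) (- int j - ?f k))"
    proof (rule sum_mono)
      fix k
      have "- int j - ?f k = int k - 1" using False by simp
      then show "pmf \<mu> k * first_passage \<mu> (k + j - 1) n
          \<le> pmf (walk_pmf \<mu> n) (?f k) * pmf (step_pmf \<mu>) (- int j - ?f k)"
        using Suc.IH[of "k + j - 1"] by (simp add: pmf_step_pmf mult.commute mult_left_mono)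
    qed
    also have "\<dots> = (\<Sum>s\<in>?f ` {..Suc n}. pmf (walk_pmf \<mu> n) s * pmf (step_pmf \<mu>) (- int j - s))"
      by (simp only: sum.reindex[OF inj] o_def)
    also have "\<dots> \<le> pmf (walk_pmf \<mu> (Suc n)) (- int j)"
      by (rule pmf_walk_Suc_ge_sum) simp
    finally show ?thesis .
  qed simp
qed simp

text \<open>To descend i + j levels, first descend i levels and then j more.\<close>
lemma first_passage_add:
  "first_passage \<mu> (i + j) n = (\<Sum>m\<le>n. first_passage \<mu> i m * first_passage \<mu> j (n - m))"
proof (induction n arbitrary: i j)
  case (Suc n)
  show ?case
  proof (cases "i = 0")
    case True
    have "(\<Sum>m\<le>Suc n. first_passage \<mu> i m * first_passage \<mu> j (Suc n - m))
        = (\<Sum>m\<in>{0}. first_passage \<mu> i m * first_passage \<mu> j (Suc n - m))"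
      by (rule sum.mono_neutral_right) (auto simp: True first_passage_0)
    then show ?thesis by (simp add: True)
  next
    case False
    let ?t = "\<lambda>k m. pmf \<mu> k * (first_passage \<mu> (k + i - 1) m * first_passage \<mu> j (n - m))"
    have "first_passage \<mu> (i + j) (Suc n)
        = (\<Sum>k\<le>Suc n. pmf \<mu> k * first_passage \<mu> ((k + i - 1) + j) n)"
      using False by (simp add: algebra_simps)
    also have "\<dots> = (\<Sum>k\<le>Suc n. \<Sum>m\<le>n. ?t k m)"
      by (simp add: Suc.IH sum_distrib_left)
    also have "\<dots> = (\<Sum>m\<le>n. \<Sum>k\<le>Suc n. ?t k m)"
      by (rule sum.swap)
    also have "\<dots> = (\<Sum>m\<le>n. first_passage \<mu> i (Suc m) * first_passage \<mu> j (n - m))"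
    proof (rule sum.cong[OF refl])
      fix m assume m: "m \<in> {..n}"
      have "(\<Sum>k\<le>Suc n. ?t k m) = (\<Sum>k\<le>Suc m. ?t k m)"
        using m False by (intro sum.mono_neutral_right) (auto simp: first_passage_eq_0)
      also have "\<dots> = first_passage \<mu> i (Suc m) * first_passage \<mu> j (n - m)"
        using False by (simp add: sum_distrib_left ac_simps distrib_left del: sum.atMost_Suc)
      finally show "(\<Sum>k\<le>Suc n. ?t k m) = first_passage \<mu> i (Suc m) * first_passage \<mu> j (n - m)" .
    qed
    also have "\<dots> = (\<Sum>m\<le>Suc n. first_passage \<mu> i m * first_passage \<mu> j (Suc n - m))"
      by (simp only: sum.atMost_Suc_shift) (simp add: False)
    finally show ?thesis .
  qed
qed simp

lemma first_passage_series_power: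
  assumes s: "0 \<le> s" and sm: "summable (\<lambda>n. first_passage \<mu> 1 n * s ^ n)"
  shows "(\<lambda>n. first_passage \<mu> k n * s ^ n) sums (\<Sum>n. first_passage \<mu> 1 n * s ^ n) ^ k"
proof (induction k)
  case 0
  have "(\<lambda>n. first_passage \<mu> 0 n * s ^ n) = (\<lambda>n. if n = 0 then 1 else 0)"
    by (auto simp: first_passage_0)
  then show ?case using sums_single[of 0 "\<lambda>_. 1::real"] by simp
next
  case (Suc k)
  let ?a = "\<lambda>j n. first_passage \<mu> j n * s ^ n"
  have conv: "?a (Suc k) = (\<lambda>n. \<Sum>m\<le>n. ?a 1 m * ?a k (n - m))"
  proof
    fix n
    have "?a (Suc k) n = (\<Sum>m\<le>n. first_passage \<mu> 1 m * first_passage \<mu> k (n - m) * s ^ n)"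
      using first_passage_add[of \<mu> 1 k n] by (simp add: sum_distrib_right)
    also have "\<dots> = (\<Sum>m\<le>n. ?a 1 m * ?a k (n - m))"
      by (intro sum.cong refl) (simp add: ac_simps flip: power_add)
    finally show "?a (Suc k) n = (\<Sum>m\<le>n. ?a 1 m * ?a k (n - m))" .
  qed
  have norm_eq: "(\<lambda>n. norm (?a j n)) = ?a j" for j
    using s by (auto intro!: abs_of_nonneg mult_nonneg_nonneg first_passage_nonneg)
  have "summable (\<lambda>n. norm (?a 1 n))" "summable (\<lambda>n. norm (?a k n))"
    using sm sums_summable[OF Suc] by (simp_all only: norm_eq)
  from Cauchy_product_sums[OF this] show ?case
    unfolding conv sums_unique[OF Suc, symmetric] by simp
qed

text \<open>Lagrange's equation y = s \<Sum> \<mu>(k) y^k, truncated to an inequality.\<close>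
lemma first_passage_series_fixpoint_ineq:
  assumes s: "0 \<le> s" and sm: "summable (\<lambda>n. first_passage \<mu> 1 n * s ^ n)"
  defines "y \<equiv> \<Sum>n. first_passage \<mu> 1 n * s ^ n"
  shows "s * (\<Sum>k\<le>K. pmf \<mu> k * y ^ k) \<le> y"
proof -
  let ?a = "\<lambda>k n. pmf \<mu> k * (first_passage \<mu> k n * s ^ n)"
  have sk: "summable (\<lambda>n. first_passage \<mu> k n * s ^ n)" for k
    using first_passage_series_power[OF s sm] by (rule sums_summable)
  have yk: "(\<Sum>n. ?a k n) = pmf \<mu> k * y ^ k" for k
    using sums_unique[OF first_passage_series_power[OF s sm]] by (simp add: suminf_mult[OF sk] y_def)
  have le: "s * (\<Sum>k\<le>K. ?a k n) \<le> first_passage \<mu> 1 (Suc n) * s ^ Suc n" for n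
  proof -
    let ?f = "\<lambda>k. pmf \<mu> k * first_passage \<mu> k n"
    have "(\<Sum>k\<le>K. ?f k) \<le> (\<Sum>k\<le>max K (Suc n). ?f k)"
      by (intro sum_mono2) (auto intro!: mult_nonneg_nonneg first_passage_nonneg)
    also have "\<dots> = (\<Sum>k\<le>Suc n. ?f k)"
      by (intro sum.mono_neutral_right) (auto simp: first_passage_eq_0)
    also have "\<dots> = first_passage \<mu> 1 (Suc n)" by (simp del: sum.atMost_Suc)
    finally have "(\<Sum>k\<le>K. ?f k) * (s * s ^ n) \<le> first_passage \<mu> 1 (Suc n) * (s * s ^ n)"
      by (intro mult_right_mono) (auto simp: s)
    then show ?thesis by (simp add: sum_distrib_right sum_distrib_left ac_simps)
  qed
  have smK: "summable (\<lambda>n. \<Sum>k\<le>K. ?a k n)"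
    by (intro summable_sum summable_mult sk)
  have "s * (\<Sum>k\<le>K. pmf \<mu> k * y ^ k) = s * (\<Sum>n. \<Sum>k\<le>K. ?a k n)"
    by (simp add: yk suminf_sum summable_mult sk)
  also have "\<dots> = (\<Sum>n. s * (\<Sum>k\<le>K. ?a k n))"
    by (rule suminf_mult[OF smK, symmetric])
  also have "\<dots> \<le> (\<Sum>n. first_passage \<mu> 1 (Suc n) * s ^ Suc n)"
    by (intro suminf_le le summable_mult smK summable_Suc_iff[THEN iffD2, OF sm])
  also have "\<dots> = y"
    using suminf_split_head[OF sm] by (simp add: y_def)
  finally show ?thesis .
qed

lemma first_passage_series_not_summable:
  assumes crit: "critical \<mu>" and p0: "pmf \<mu> 0 > 0" and s: "s > 1"
  shows "\<not> summable (\<lambda>n. first_passage \<mu> 1 n * s ^ n)"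
proof
  assume sm: "summable (\<lambda>n. first_passage \<mu> 1 n * s ^ n)"
  define y where "y = (\<Sum>n. first_passage \<mu> 1 n * s ^ n)"
  have "(\<Sum>n\<in>{1}. first_passage \<mu> 1 n * s ^ n) \<le> y"
    unfolding y_def using s
    by (intro sum_le_suminf sm) (auto intro!: mult_nonneg_nonneg first_passage_nonneg)
  then have "pmf \<mu> 0 * s \<le> y" by (simp add: numeral_eq_Suc)
  moreover have "0 < pmf \<mu> 0 * s" using p0 s by simp
  ultimately have ypos: "0 < y" by linarith
  let ?b = "\<lambda>k. pmf \<mu> k + (y - 1) * (real k * pmf \<mu> k)"
  have bern: "s * (\<Sum>k\<le>K. ?b k) \<le> y" for K
  proof -
    have "?b k \<le> pmf \<mu> k * y ^ k" for k
    proof -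
      have "1 + real k * (y - 1) \<le> (1 + (y - 1)) ^ k"
        using ypos by (intro Bernoulli_inequality) simp
      then have "pmf \<mu> k * (1 + real k * (y - 1)) \<le> pmf \<mu> k * y ^ k"
        by (intro mult_left_mono) auto
      then show ?thesis by (simp add: algebra_simps)
    qed
    then have "s * (\<Sum>k\<le>K. ?b k) \<le> s * (\<Sum>k\<le>K. pmf \<mu> k * y ^ k)"
      using s by (intro mult_left_mono sum_mono) auto
    also have "\<dots> \<le> y"
      unfolding y_def using first_passage_series_fixpoint_ineq[of s \<mu> K] s sm by simp
    finally show ?thesis .
  qed
  have "?b sums (1 + (y - 1) * 1)"
    using crit unfolding critical_def by (intro sums_add pmf_nat_sums_1 sums_mult)
  then have "(\<lambda>K. s * (\<Sum>k\<le>K. ?b k)) \<longlonglongrightarrow> s * y"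
    by (intro tendsto_mult tendsto_const) (simp add: sums_def_le)
  then have "s * y \<le> y" by (rule LIMSEQ_le_const2) (use bern in auto)
  then show False using s ypos by (simp add: mult_le_cancel_right1)
qed

lemma first_passage_frequently_ge_exp:
  assumes crit: "critical \<mu>" and p0: "pmf \<mu> 0 > 0" and e: "e > 0"
  shows "\<exists>n\<ge>N. exp (- e * n) \<le> first_passage \<mu> 1 n"
proof (rule ccontr)
  assume "\<not> ?thesis"
  then have lt: "\<And>n. n \<ge> N \<Longrightarrow> first_passage \<mu> 1 n < exp (- e * n)" by (meson not_le)
  define s where "s = exp (e / 2)"
  have s1: "s > 1" using e by (simp add: s_def)
  have "summable (\<lambda>n. first_passage \<mu> 1 n * s ^ n)"
  proof (rule summable_comparison_test')
    show "summable (\<lambda>n. exp (- e / 2) ^ n)" using e by (intro summable_geometric) simp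
    fix n assume "n \<ge> N"
    have "norm (first_passage \<mu> 1 n * s ^ n) = first_passage \<mu> 1 n * s ^ n"
      using s1 by (simp add: first_passage_nonneg)
    also have "\<dots> \<le> exp (- e * n) * s ^ n"
      using lt[OF \<open>n \<ge> N\<close>] s1 by (intro mult_right_mono) auto
    also have "\<dots> = exp (- e / 2) ^ n"
      by (simp add: s_def flip: exp_of_nat_mult exp_add)
    finally show "norm (first_passage \<mu> 1 n * s ^ n) \<le> exp (- e / 2) ^ n" .
  qed
  with first_passage_series_not_summable[OF crit p0 s1] show False by simp
qed

section \<open>Subexponential lower bound\<close>

lemma critical_ex_ge_2:
  assumes crit: "critical \<mu>" and p0: "pmf \<mu> 0 > 0"
  shows "\<exists>k\<ge>2. pmf \<mu> k > 0"
proof (rule ccontr)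
  assume "\<not> ?thesis"
  then have z: "\<And>k. k \<ge> 2 \<Longrightarrow> pmf \<mu> k = 0"
    by (meson not_le pmf_nonneg order.not_eq_order_implies_strict)
  have "(\<lambda>k. real k * pmf \<mu> k) = (\<lambda>k. if k = 1 then pmf \<mu> 1 else 0)"
  proof
    fix k show "real k * pmf \<mu> k = (if k = 1 then pmf \<mu> 1 else 0)"
      using z[of k] by (cases "k = 0 \<or> k = 1") auto
  qed
  then have "(\<lambda>k. real k * pmf \<mu> k) sums pmf \<mu> 1"
    using sums_single[of 1 "\<lambda>_. pmf \<mu> 1"] by simp
  then have p1: "pmf \<mu> 1 = 1" using crit sums_unique2 unfolding critical_def by blast
  have "(\<Sum>k\<in>{0,1}. pmf \<mu> k) \<le> (\<Sum>k. pmf \<mu> k)"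
    by (intro sum_le_suminf) (auto intro: sums_summable[OF pmf_nat_sums_1])
  then have "pmf \<mu> 0 + pmf \<mu> 1 \<le> 1" using sums_unique[OF pmf_nat_sums_1[of \<mu>]] by simp
  then show False using p0 p1 by simp
qed

text \<open>
  A step of size k - 1 followed by k - 1 first passages below the current level, each of
  length n, returns the walk to 0 at time 1 + (k - 1) n.
\<close>
lemma pmf_walk_return_ge_exp:
  assumes crit: "critical \<mu>" and p0: "pmf \<mu> 0 > 0" and e: "e > 0"
  shows "\<exists>g\<ge>1. exp (- e * g) \<le> pmf (walk_pmf \<mu> g) 0"
proof -
  obtain k where k: "k \<ge> 2" "pmf \<mu> k > 0" using critical_ex_ge_2[OF crit p0] by blast
  define N where "N = nat \<lceil>- 2 * ln (pmf \<mu> k) / e\<rceil>"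
  obtain n where n: "n \<ge> N" "exp (- e / 2 * n) \<le> first_passage \<mu> 1 n"
    using first_passage_frequently_ge_exp[OF crit p0, of "e / 2"] e by auto
  define g where "g = 1 + (k - 1) * n"
  have "1 \<le> k - 1" using k by simp
  then have "n \<le> g" unfolding g_def by (metis mult_1 mult_le_mono1 trans_le_add2)
  then have "- 2 * ln (pmf \<mu> k) / e \<le> g"
    using n(1) unfolding N_def by linarith
  then have "- ln (pmf \<mu> k) \<le> e / 2 * g"
    using e by (simp add: field_simps)
  then have "exp (- e / 2 * g) \<le> exp (ln (pmf \<mu> k))"
    by (subst exp_le_cancel_iff) linarith
  also have "\<dots> = pmf \<mu> k"
    using k by simp
  also have "\<dots> = pmf (walk_pmf \<mu> 1) (int k - 1)"
    by (rule pmf_walk_one[symmetric])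
  finally have first_step: "exp (- e / 2 * g) \<le> pmf (walk_pmf \<mu> 1) (int k - 1)" .
  have "exp (- e / 2 * g) \<le> exp (- e / 2 * n) ^ (k - 1)"
    using e by (simp add: g_def ac_simps flip: exp_of_nat_mult)
  also have "\<dots> \<le> first_passage \<mu> 1 n ^ (k - 1)"
    using n by (intro power_mono) auto
  also have "\<dots> \<le> pmf (walk_pmf \<mu> n) (-1) ^ (k - 1)"
    using first_passage_le_pmf_walk[of \<mu> 1 n] by (intro power_mono) (auto intro: first_passage_nonneg)
  also have "\<dots> \<le> pmf (walk_pmf \<mu> ((k - 1) * n)) (- (int k - 1))"
    using pmf_walk_power_le[of \<mu> n "-1" "k - 1"] k by (simp add: of_nat_diff)
  finally have excursions: "exp (- e / 2 * g) \<le> pmf (walk_pmf \<mu> ((k - 1) * n)) (- (int k - 1))" .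
  have "exp (- e * g) = exp (- e / 2 * g) * exp (- e / 2 * g)"
    by (simp flip: exp_add)
  also have "\<dots> \<le> pmf (walk_pmf \<mu> 1) (int k - 1) * pmf (walk_pmf \<mu> ((k - 1) * n)) (- (int k - 1))"
    using first_step excursions by (intro mult_mono) auto
  also have "\<dots> \<le> pmf (walk_pmf \<mu> g) 0"
    using pmf_walk_supermult[of \<mu> 1 "int k - 1" "(k - 1) * n" "- (int k - 1)"] by (simp add: g_def)
  finally show ?thesis by (intro exI[of _ g]) (simp add: g_def)
qed

text \<open>
  On each residue class mod g, the first time h with p h > 0 carries over to h + c g with a
  factor q^c; the finitely many such first times provide the constant.
\<close>
lemma lower_bound_by_residue_classes:
  fixes p :: "nat \<Rightarrow> real"
  assumes g: "g > 0" and r: "0 < r" "r \<le> 1" "r ^ g \<le> q"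
    and shift: "\<And>h c. p h * q ^ c \<le> p (h + c * g)"
  shows "\<exists>C>0. \<forall>n. 0 < p n \<longrightarrow> C * r ^ n \<le> p n"
proof -
  define P where "P = {n. 0 < p n}"
  define rep where "rep n = (LEAST h. h \<in> P \<and> h mod g = n mod g)" for n
  have rep: "rep n \<in> P \<and> rep n mod g = n mod g \<and> rep n \<le> n" if "n \<in> P" for n
    unfolding rep_def using that
    by (auto intro: LeastI2[of _ n] Least_le)
  have rep_mod: "rep n = rep (n mod g)" for n
    by (simp add: rep_def)
  have fin: "finite (rep ` P)"
  proof (rule finite_subset[of _ "rep ` {..<g}"])
    show "rep ` P \<subseteq> rep ` {..<g}"
      using g rep_mod by (metis image_mono image_subsetI imageI lessThan_iff mod_less_divisor subset_UNIV)
  qed simp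
  show ?thesis
  proof (cases "P = {}")
    case True
    then show ?thesis by (intro exI[of _ 1]) (auto simp: P_def)
  next
    case False
    define C where "C = Min (p ` rep ` P)"
    have C: "0 < C" "\<And>n. n \<in> P \<Longrightarrow> C \<le> p (rep n)"
      using fin False rep by (auto simp: C_def P_def)
    show ?thesis
    proof (intro exI[of _ C] conjI allI impI \<open>0 < C\<close>)
      fix n assume "0 < p n"
      then have "n \<in> P" by (simp add: P_def)
      define h where "h = rep n"
      define c where "c = (n - h) div g"
      have "g dvd n - h" "h \<le> n"
        using rep[OF \<open>n \<in> P\<close>] mod_eq_dvd_iff_nat[of "rep n" n g] by (auto simp: h_def)
      then have n_eq: "n = h + c * g" by (simp add: c_def)
      have "C * r ^ n \<le> C * (r ^ g) ^ c"
        using r C by (subst n_eq) (simp add: power_decreasing flip: power_mult)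
      also have "\<dots> \<le> p h * q ^ c"
        using C(2)[OF \<open>n \<in> P\<close>] r C by (intro mult_mono power_mono) (auto simp: h_def)
      also have "\<dots> \<le> p n"
        using shift n_eq by simp
      finally show "C * r ^ n \<le> p n" .
    qed
  qed
qed

lemma pmf_walk_minus_one_lower_bound:
  assumes "critical \<mu>" and "pmf \<mu> 0 > 0" and e: "e > 0"
  shows "\<exists>C>0. \<forall>n. 0 < pmf (walk_pmf \<mu> n) (-1) \<longrightarrow> C * exp (- e) ^ n \<le> pmf (walk_pmf \<mu> n) (-1)"
proof -
  obtain g where g: "g \<ge> 1" "exp (- e * g) \<le> pmf (walk_pmf \<mu> g) 0"
    using pmf_walk_return_ge_exp[OF assms] by blast
  show ?thesis
  proof (rule lower_bound_by_residue_classes)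
    show "exp (- e) ^ g \<le> pmf (walk_pmf \<mu> g) 0"
      using g by (simp add: mult.commute flip: exp_of_nat_mult)
    fix h c
    have "pmf (walk_pmf \<mu> h) (-1) * pmf (walk_pmf \<mu> g) 0 ^ c
        \<le> pmf (walk_pmf \<mu> h) (-1) * pmf (walk_pmf \<mu> (c * g)) (of_nat c * 0)"
      by (intro mult_left_mono pmf_walk_power_le) simp
    also have "\<dots> \<le> pmf (walk_pmf \<mu> (h + c * g)) (-1 + of_nat c * 0)"
      by (rule pmf_walk_supermult)
    finally show "pmf (walk_pmf \<mu> h) (-1) * pmf (walk_pmf \<mu> g) 0 ^ c
        \<le> pmf (walk_pmf \<mu> (h + c * g)) (-1)" by simp
  qed (use g e in auto)
qed

lemma tendsto_ln_div_0_of_subexponential: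
  fixes p :: "nat \<Rightarrow> real"
  assumes le_1: "\<And>n. p n \<le> 1"
    and lower: "\<And>e. e > 0 \<Longrightarrow> \<exists>C>0. \<forall>n. 0 < p n \<longrightarrow> C * exp (- e) ^ n \<le> p n"
  shows "((\<lambda>n. ln (p n) / real n) \<longlongrightarrow> 0) (inf sequentially (principal {n. 0 < p n}))"
  unfolding tendsto_iff eventually_inf_principal eventually_sequentially
proof (intro allI impI)
  fix e :: real assume e: "e > 0"
  obtain C where C: "C > 0" "\<And>n. 0 < p n \<Longrightarrow> C * exp (- e / 2) ^ n \<le> p n"
    using lower[of "e / 2"] e by auto
  define N where "N = nat \<lceil>- 2 * ln C / e\<rceil> + 1"
  show "\<exists>N. \<forall>n\<ge>N. n \<in> {n. 0 < p n} \<longrightarrow> dist (ln (p n) / real n) 0 < e"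
  proof (intro exI[of _ N] allI impI)
    fix n assume n: "n \<ge> N" and "n \<in> {n. 0 < p n}"
    then have pn: "0 < p n" by simp
    have n_pos: "real n > 0" using n by (simp add: N_def)
    have "- 2 * ln C / e < n"
      using n by (simp add: N_def) linarith
    then have large_n: "- ln C < e / 2 * n"
      using e by (simp add: field_simps)
    have "ln (C * exp (- e / 2) ^ n) \<le> ln (p n)"
      using C pn by (subst ln_le_cancel_iff) auto
    then have "ln C - e / 2 * n \<le> ln (p n)"
      using C by (simp add: ln_mult ln_realpow mult_ac)
    with large_n n_pos have "- ln (p n) / n < e"
      by (simp add: field_simps)
    moreover have "ln (p n) \<le> 0" using pn le_1[of n] by simp
    ultimately show "dist (ln (p n) / real n) 0 < e"
      using n_pos by (simp add: abs_div)
  qed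
qed

theorem mainTheorem12:
  fixes \<mu> :: "nat pmf"
  assumes "critical \<mu>"
  shows "((\<lambda>n. ln (pmf (walk_pmf \<mu> n) (-1)) / real n) \<longlongrightarrow> 0)
           (inf sequentially (principal {n. pmf (walk_pmf \<mu> n) (-1) > 0}))"
proof (cases "pmf \<mu> 0 = 0")
  case True
  then have "pmf (walk_pmf \<mu> n) (-1) = 0" for n
    using set_pmf_walk_nonneg[of \<mu> n] by (auto simp: set_pmf_iff)
  then show ?thesis by simp
next
  case False
  then have "pmf \<mu> 0 > 0" by (simp add: order_less_le)
  with assms show ?thesis
    by (intro tendsto_ln_div_0_of_subexponential pmf_le_1 pmf_walk_minus_one_lower_bound)
qed

end
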